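(* Let $\mathcal G=(\mathcal V,\mathcal E,W)$ be a network with $n=|\mathcal V|$ nodes and out-degree vector $w$, let $h^-\le h^+$ in $\mathbb R^{\mathcal V}$ and $\mathcal H=\prod_i[h_i^-,h_i^+]$, and assume $\mathcal G$ is $\mathcal H$-robustly indecomposable. Then: (i) for every configuration $x\in\mathcal X$ there exists an $\mathcal H$-robust I-path of length at most $n$ from $x$ to some configuration in $\{\pm\mathbf 1\}$; in particular $\{\pm\mathbf 1\}$ is globally I-reachable for the coordination game with every external field $h\in\mathcal H$; (ii) if $w\ge h^+$ and $w\ge -h^-$ (i.e., the game is $\mathcal H$-robustly regular), then for every $h\in\mathcal H$ the set of equilibria is $\mathcal X^*_h=\{\pm\mathbf 1\}$ and it is globally I-stable; (iii) if for some $a\in\{\pm1\}$ one has $w\ge -a\,h^{-a}$ and $w\ngeq a\,h^{-a}$, then from every configuration $x\in\mathcal X$ there exists an $\mathcal H$-robust I-path to $a\mathbf 1$, and for every $h\in\mathcal H$ the set of equilibria is $\mathcal X^*_h=\{a\mathbf 1\}$ and it is globally BR-stable.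
   Context: A network is $\mathcal G=(\mathcal V,\mathcal E,W)$ with finite node set $\mathcal V$, links $\mathcal E\subseteq\mathcal V\times\mathcal V$, weight matrix $W\in\mathbb R_+^{\mathcal V\times\mathcal V}$ with zero diagonal, $W_{ij}>0$ iff $(i,j)\in\mathcal E$; for $\mathcal S\subseteq\mathcal V$, $w_i^{\mathcal S}=\sum_{j\in\mathcal S}W_{ij}$; $w=W\mathbf 1$. $\mathcal X=\{-1,+1\}^{\mathcal V}$. Componentwise order; $x\ngeq y$ means $x_i<y_i$ for some $i$. For $a=+1$ (resp. $-1$), $h^{-a}$ denotes $h^-$ (resp. $h^+$). $h$-indecomposable: for every partition $\mathcal V=\mathcal V^+\cup\mathcal V^-$ into two disjoint nonempty sets there exist $s\in\{-,+\}$ and $i\in\mathcal V^s$ with $w_i^{\mathcal V^s}+s\,h_i<w_i^{\mathcal V^{-s}}$ ($s\,h_i$ is $\pm h_i$ according to $s$, $-s$ is the opposite sign). $\mathcal G$ is $\mathcal H$-robustly indecomposable if it is $h$-indecomposable for every $h\in\mathcal H$. Coordination game with external field $h$: players $\mathcal V$, actions $\{\pm1\}$, utilities $u_i(x)=x_i(\sum_jW_{ij}x_j+h_i)$; equilibria $x^*$ with $x_i^*$ maximizing $u_i(\cdot,x^*_{-i})$, set $\mathcal X^*_h$. An admissible path of length $l\ge0$ is a sequence $x^{(0)},\dots,x^{(l)}$ with consecutive configurations differing exactly in the action of one player $i_k$; for a given $h$ it is an I-path if $u_{i_k}(x^{(k)})>u_{i_k}(x^{(k-1)})$ for all $k$,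 a BR-path if $\ge$ holds instead. An $\mathcal H$-robust I-path is an admissible path that is an I-path for the game with external field $h$ for every $h\in\mathcal H$. For $\alpha\in\{\mathrm I,\mathrm{BR}\}$, $\mathcal Y\subseteq\mathcal X$ is globally $\alpha$-reachable if from every $x$ there is an $\alpha$-path to some element of $\mathcal Y$, and globally $\alpha$-stable if in addition there is no $\alpha$-path from any $y\in\mathcal Y$ to any $z\notin\mathcal Y$. *)

theory Defs
  imports Complex_Main
begin

text \<open>Nodes are the elements of a finite type 'v (so V = UNIV). A network is given
by its weight matrix W (links are the pairs with W i j > 0).\<close>

definition network :: "('v::finite \<Rightarrow> 'v \<Rightarrow> real) \<Rightarrow> bool" where
  "network W \<longleftrightarrow> (\<forall>i j. W i j \<ge> 0) \<and> (\<forall>i. W i i = 0)"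

definition wS :: "('v \<Rightarrow> 'v \<Rightarrow> real) \<Rightarrow> 'v set \<Rightarrow> 'v \<Rightarrow> real" where
  "wS W S i = (\<Sum>j\<in>S. W i j)"

definition outdeg :: "('v::finite \<Rightarrow> 'v \<Rightarrow> real) \<Rightarrow> 'v \<Rightarrow> real" where
  "outdeg W i = (\<Sum>j\<in>UNIV. W i j)"

definition configs :: "('v \<Rightarrow> real) set" where
  "configs = {x. \<forall>i. x i = 1 \<or> x i = -1}"

definition h_indecomposable :: "('v::finite \<Rightarrow> 'v \<Rightarrow> real) \<Rightarrow> ('v \<Rightarrow> real) \<Rightarrow> bool" where
  "h_indecomposable W h \<longleftrightarrow>
     (\<forall>Vp Vm. Vp \<inter> Vm = {} \<and> Vp \<union> Vm = UNIV \<and> Vp \<noteq> {} \<and> Vm \<noteq> {} \<longrightarrow>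
        (\<exists>i\<in>Vp. wS W Vp i + h i < wS W Vm i) \<or> (\<exists>i\<in>Vm. wS W Vm i - h i < wS W Vp i))"

definition robustly_indecomposable ::
  "('v::finite \<Rightarrow> 'v \<Rightarrow> real) \<Rightarrow> ('v \<Rightarrow> real) set \<Rightarrow> bool" where
  "robustly_indecomposable W H \<longleftrightarrow> (\<forall>h\<in>H. h_indecomposable W h)"

definition box :: "('v \<Rightarrow> real) \<Rightarrow> ('v \<Rightarrow> real) \<Rightarrow> ('v \<Rightarrow> real) set" where
  "box hm hp = {h. \<forall>i. hm i \<le> h i \<and> h i \<le> hp i}"

definition utility :: "('v::finite \<Rightarrow> 'v \<Rightarrow> real) \<Rightarrow> ('v \<Rightarrow> real) \<Rightarrow> ('v \<Rightarrow> real) \<Rightarrow> 'v \<Rightarrow> real" where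
  "utility W h x i = x i * ((\<Sum>j\<in>UNIV. W i j * x j) + h i)"

definition equilibria :: "('v::finite \<Rightarrow> 'v \<Rightarrow> real) \<Rightarrow> ('v \<Rightarrow> real) \<Rightarrow> ('v \<Rightarrow> real) set" where
  "equilibria W h = {x \<in> configs. \<forall>i. \<forall>a\<in>{-1, 1}. utility W h (x(i := a)) i \<le> utility W h x i}"

text \<open>A path x^(0),...,x^(l) is a nonempty list of configurations; its length is
  length xs - 1. Step k goes from xs!k to xs!(k+1) and flips exactly player i.\<close>

definition step_player :: "('v \<Rightarrow> real) \<Rightarrow> ('v \<Rightarrow> real) \<Rightarrow> 'v \<Rightarrow> bool" where
  "step_player x y i \<longleftrightarrow> x i \<noteq> y i \<and> (\<forall>j. j \<noteq> i \<longrightarrow> x j = y j)"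

definition admissible_path :: "('v \<Rightarrow> real) list \<Rightarrow> bool" where
  "admissible_path xs \<longleftrightarrow> xs \<noteq> [] \<and> set xs \<subseteq> configs \<and>
     (\<forall>k. Suc k < length xs \<longrightarrow> (\<exists>i. step_player (xs!k) (xs!Suc k) i))"

definition I_path :: "('v::finite \<Rightarrow> 'v \<Rightarrow> real) \<Rightarrow> ('v \<Rightarrow> real) \<Rightarrow> ('v \<Rightarrow> real) list \<Rightarrow> bool" where
  "I_path W h xs \<longleftrightarrow> admissible_path xs \<and>
     (\<forall>k i. Suc k < length xs \<longrightarrow> step_player (xs!k) (xs!Suc k) i \<longrightarrow>
        utility W h (xs!Suc k) i > utility W h (xs!k) i)"

definition BR_path :: "('v::finite \<Rightarrow> 'v \<Rightarrow> real) \<Rightarrow> ('v \<Rightarrow> real) \<Rightarrow> ('v \<Rightarrow> real) list \<Rightarrow> bool" where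
  "BR_path W h xs \<longleftrightarrow> admissible_path xs \<and>
     (\<forall>k i. Suc k < length xs \<longrightarrow> step_player (xs!k) (xs!Suc k) i \<longrightarrow>
        utility W h (xs!Suc k) i \<ge> utility W h (xs!k) i)"

definition robust_I_path ::
  "('v::finite \<Rightarrow> 'v \<Rightarrow> real) \<Rightarrow> ('v \<Rightarrow> real) set \<Rightarrow> ('v \<Rightarrow> real) list \<Rightarrow> bool" where
  "robust_I_path W H xs \<longleftrightarrow> admissible_path xs \<and> (\<forall>h\<in>H. I_path W h xs)"

definition globally_reachable :: "(('v \<Rightarrow> real) list \<Rightarrow> bool) \<Rightarrow> ('v \<Rightarrow> real) set \<Rightarrow> bool" where
  "globally_reachable P Y \<longleftrightarrow> (\<forall>x\<in>configs. \<exists>xs. P xs \<and> hd xs = x \<and> last xs \<in> Y)"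

definition globally_stable :: "(('v \<Rightarrow> real) list \<Rightarrow> bool) \<Rightarrow> ('v \<Rightarrow> real) set \<Rightarrow> bool" where
  "globally_stable P Y \<longleftrightarrow> globally_reachable P Y \<and>
     \<not> (\<exists>xs. P xs \<and> hd xs \<in> Y \<and> last xs \<notin> Y)"

text \<open>h^{-a}: h^- for a = 1, h^+ for a = -1.\<close>
definition hneg :: "real \<Rightarrow> ('v \<Rightarrow> real) \<Rightarrow> ('v \<Rightarrow> real) \<Rightarrow> ('v \<Rightarrow> real)" where
  "hneg a hm hp = (if a = 1 then hm else hp)"

end

theory Submission
  imports Defs
begin

(* Identify a configuration with the set P of players choosing +1. For every field in the box
   [h^-, h^+], a player of P improves by switching to -1 iff its local field plus h^+_i is
   negative, and a player outside P improves by switching to +1 iff its local field plus h^-_i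
   is positive. Call P stuck if no such robust move exists; h-indecomposability for the field
   that equals h^+ on P and h^- off P shows that only the two consensus sets are stuck. Both
   move conditions are monotone in P, so a Knaster-Tarski argument places a stuck set between
   any self-supporting set A (no player of A can move down) and any closed superset C of A
   (no player outside C is forced up). Hence from P either upward moves never get stuck before
   everybody plays +1 (if P contains a nonempty self-supporting set), or downward moves never
   get stuck before everybody plays -1; such monotone paths have length at most n.
   Equilibria are the configurations with nonnegative utilities, h-indecomposability says that
   every non-consensus configuration has a player with negative utility, and the first step of
   an I-path (BR-path) is made by a player with negative (nonpositive) utility; this gives the
   statements on equilibria and stability. *)

definition config :: "'v set \<Rightarrow> 'v \<Rightarrow> real" where
  "config P = (\<lambda>j. if j \<in> P then 1 else -1)"

lemma config_in_configs: "config P \<in> configs"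
  by (auto simp: config_def configs_def)

lemma configs_eq_config: "x \<in> configs \<Longrightarrow> x = config {j. x j = 1}"
  by (rule ext) (auto simp: config_def configs_def)

lemma config_UNIV [simp]: "config UNIV = (\<lambda>_. 1)"
  and config_empty [simp]: "config {} = (\<lambda>_. -1)"
  by (auto simp: config_def)

lemma config_insert: "config (insert i P) = (config P)(i := 1)"
  and config_remove: "config (P - {i}) = (config P)(i := -1)"
  by (auto simp: config_def)

lemma consensus_in_configs: "(\<lambda>_. 1) \<in> configs" "(\<lambda>_. -1) \<in> configs"
  by (auto simp: configs_def)

definition local_field :: "('v::finite \<Rightarrow> 'v \<Rightarrow> real) \<Rightarrow> ('v \<Rightarrow> real) \<Rightarrow> 'v \<Rightarrow> real" where
  "local_field W x i = (\<Sum>j\<in>UNIV. W i j * x j)"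

lemma utility_eq: "utility W h x i = x i * (local_field W x i + h i)"
  by (simp add: utility_def local_field_def)

lemma local_field_fun_upd_self:
  assumes "network W"
  shows "local_field W (x(i := a)) i = local_field W x i"
  using assms unfolding local_field_def network_def by (intro sum.cong) auto

lemma utility_fun_upd_self:
  "network W \<Longrightarrow> utility W h (x(i := a)) i = a * (local_field W x i + h i)"
  by (simp add: utility_eq local_field_fun_upd_self)

lemma local_field_config: "local_field W (config P) i = wS W P i - wS W (-P) i"
proof -
  have "local_field W (config P) i = (\<Sum>j\<in>P. W i j * config P j) + (\<Sum>j\<in>-P. W i j * config P j)"
    unfolding local_field_def by (subst sum.union_disjoint[symmetric]) (auto intro: sum.cong)
  also have "\<dots> = wS W P i - wS W (-P) i"
    by (simp add: wS_def config_def sum_negf)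
  finally show ?thesis .
qed

lemma local_field_config_mono:
  assumes "network W" "P \<subseteq> Q"
  shows "local_field W (config P) i \<le> local_field W (config Q) i"
  unfolding local_field_def
proof (rule sum_mono)
  fix j
  have "config P j \<le> config Q j" using assms(2) by (auto simp: config_def)
  then show "W i j * config P j \<le> W i j * config Q j"
    using assms(1) by (simp add: network_def mult_left_mono)
qed

lemma local_field_all_plus: "local_field W (\<lambda>_. 1) i = outdeg W i"
  and local_field_all_minus: "local_field W (\<lambda>_. -1) i = - outdeg W i"
  by (simp_all add: local_field_def outdeg_def sum_negf)

lemma utility_all_plus: "utility W h (\<lambda>_. 1) i = outdeg W i + h i"
  and utility_all_minus: "utility W h (\<lambda>_. -1) i = outdeg W i - h i"
  by (simp_all add: utility_eq local_field_all_plus local_field_all_minus)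

lemma utility_step_player:
  assumes "network W" "x \<in> configs" "y \<in> configs" "step_player x y i"
  shows "utility W h y i = - utility W h x i"
proof -
  have "x i = 1 \<or> x i = -1" "y i = 1 \<or> y i = -1" "x i \<noteq> y i"
    using assms(2-4) by (auto simp: configs_def step_player_def)
  then have "y i = - x i" by auto
  then have "y = x(i := - x i)" using assms(4) by (auto simp: step_player_def)
  then show ?thesis using utility_fun_upd_self[OF assms(1)] by (metis utility_eq mult_minus_left)
qed

lemma equilibria_iff:
  assumes "network W"
  shows "x \<in> equilibria W h \<longleftrightarrow> x \<in> configs \<and> (\<forall>i. 0 \<le> utility W h x i)"
proof (cases "x \<in> configs")
  case True
  have "(\<forall>a\<in>{-1, 1}. utility W h (x(i := a)) i \<le> utility W h x i) \<longleftrightarrow> 0 \<le> utility W h x i"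
    for i
  proof -
    have "x i = 1 \<or> x i = -1" using True by (simp add: configs_def)
    then show ?thesis unfolding utility_fun_upd_self[OF assms] utility_eq[of W h x] by auto
  qed
  then show ?thesis using True by (simp add: equilibria_def)
qed (simp add: equilibria_def)

lemma h_indecomposable_negative_utility:
  assumes "h_indecomposable W h" "P \<noteq> {}" "P \<noteq> UNIV"
  obtains i where "utility W h (config P) i < 0"
proof -
  have "P \<inter> -P = {} \<and> P \<union> -P = UNIV \<and> P \<noteq> {} \<and> -P \<noteq> {}" using assms(2,3) by auto
  then have "(\<exists>i\<in>P. wS W P i + h i < wS W (-P) i) \<or> (\<exists>i\<in>-P. wS W (-P) i - h i < wS W P i)"
    using assms(1) unfolding h_indecomposable_def by blast
  then show ?thesis
  proof (elim disjE bexE)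
    fix i assume "i \<in> P" "wS W P i + h i < wS W (-P) i"
    then show ?thesis by (intro that[of i]) (simp add: utility_eq local_field_config, simp add: config_def)
  next
    fix i assume "i \<in> -P" "wS W (-P) i - h i < wS W P i"
    then show ?thesis by (intro that[of i]) (simp add: utility_eq local_field_config, simp add: config_def)
  qed
qed

lemma equilibria_subset_consensus:
  assumes "network W" "h_indecomposable W h"
  shows "equilibria W h \<subseteq> {(\<lambda>_. 1), (\<lambda>_. -1)}"
proof
  fix x assume x: "x \<in> equilibria W h"
  define P where "P = {j. x j = 1}"
  have "x \<in> configs" "\<forall>i. 0 \<le> utility W h x i" using x equilibria_iff[OF assms(1)] by auto
  moreover have "x = config P" using configs_eq_config[OF \<open>x \<in> configs\<close>] by (simp add: P_def)
  ultimately have "P = {} \<or> P = UNIV"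
    using h_indecomposable_negative_utility[OF assms(2)] by (metis not_le)
  then show "x \<in> {(\<lambda>_. 1), (\<lambda>_. -1)}" using \<open>x = config P\<close> by auto
qed

lemma admissible_path_first_step:
  assumes "network W" "admissible_path xs" "Suc 0 < length xs"
  obtains i where "step_player (xs ! 0) (xs ! 1) i"
    "utility W h (xs ! 1) i = - utility W h (hd xs) i"
proof -
  have "xs ! 0 \<in> configs" "xs ! 1 \<in> configs" "hd xs = xs ! 0"
    using assms(2,3) by (auto simp: admissible_path_def hd_conv_nth)
  moreover obtain i where "step_player (xs ! 0) (xs ! 1) i"
    using assms(2,3) by (auto simp: admissible_path_def)
  ultimately show ?thesis using that utility_step_player[OF assms(1)] by metis
qed

lemma I_path_negative_utility:
  assumes "network W" "I_path W h xs" "Suc 0 < length xs"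
  obtains i where "utility W h (hd xs) i < 0"
proof -
  obtain i where "step_player (xs ! 0) (xs ! 1) i"
      and flip: "utility W h (xs ! 1) i = - utility W h (hd xs) i"
    using admissible_path_first_step assms I_path_def by metis
  then have "utility W h (xs ! 0) i < utility W h (xs ! 1) i"
    using assms(2,3) unfolding I_path_def by (metis One_nat_def)
  moreover have "hd xs = xs ! 0" using assms(3) by (cases xs) auto
  ultimately show ?thesis using that flip by simp
qed

lemma BR_path_nonpositive_utility:
  assumes "network W" "BR_path W h xs" "Suc 0 < length xs"
  obtains i where "utility W h (hd xs) i \<le> 0"
proof -
  obtain i where "step_player (xs ! 0) (xs ! 1) i"
      and flip: "utility W h (xs ! 1) i = - utility W h (hd xs) i"
    using admissible_path_first_step assms BR_path_def by metis
  then have "utility W h (xs ! 0) i \<le> utility W h (xs ! 1) i"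
    using assms(2,3) unfolding BR_path_def by (metis One_nat_def)
  moreover have "hd xs = xs ! 0" using assms(3) by (cases xs) auto
  ultimately show ?thesis using that flip by simp
qed

lemma globally_stable_I_if_equilibria:
  assumes "network W" "globally_reachable (I_path W h) Y" "Y \<subseteq> equilibria W h"
  shows "globally_stable (I_path W h) Y"
  unfolding globally_stable_def
proof (intro conjI assms(2) notI, elim exE conjE)
  fix xs assume xs: "I_path W h xs" "hd xs \<in> Y" "last xs \<notin> Y"
  then have "Suc 0 < length xs"
    by (cases xs) (auto simp: I_path_def admissible_path_def)
  then obtain i where "utility W h (hd xs) i < 0"
    using I_path_negative_utility[OF assms(1) xs(1)] by blast
  then show False using xs(2) assms(3) equilibria_iff[OF assms(1)] by (meson not_le subsetD)
qed

lemma globally_stable_BR_if_positive: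
  assumes "network W" "globally_reachable (BR_path W h) Y" "\<forall>y\<in>Y. \<forall>i. 0 < utility W h y i"
  shows "globally_stable (BR_path W h) Y"
  unfolding globally_stable_def
proof (intro conjI assms(2) notI, elim exE conjE)
  fix xs assume xs: "BR_path W h xs" "hd xs \<in> Y" "last xs \<notin> Y"
  then have "Suc 0 < length xs"
    by (cases xs) (auto simp: BR_path_def admissible_path_def)
  then obtain i where "utility W h (hd xs) i \<le> 0"
    using BR_path_nonpositive_utility[OF assms(1) xs(1)] by blast
  then show False using xs(2) assms(3) by (meson not_le)
qed

definition robust_improvement ::
  "('v::finite \<Rightarrow> 'v \<Rightarrow> real) \<Rightarrow> ('v \<Rightarrow> real) set \<Rightarrow> ('v \<Rightarrow> real) \<Rightarrow> ('v \<Rightarrow> real) \<Rightarrow> bool" where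
  "robust_improvement W H x y \<longleftrightarrow> (\<exists>i. step_player x y i) \<and>
     (\<forall>h\<in>H. \<forall>i. step_player x y i \<longrightarrow> utility W h x i < utility W h y i)"

lemma robust_I_path_iff:
  "robust_I_path W H xs \<longleftrightarrow>
     xs \<noteq> [] \<and> set xs \<subseteq> configs \<and> successively (robust_improvement W H) xs"
  unfolding robust_I_path_def I_path_def admissible_path_def robust_improvement_def
    successively_conv_nth by blast

lemma robust_I_path_Cons:
  "robust_I_path W H (x # xs) \<longleftrightarrow>
     x \<in> configs \<and> (xs = [] \<or> robust_improvement W H x (hd xs) \<and> robust_I_path W H xs)"
  by (auto simp: robust_I_path_iff successively_Cons)

lemma robust_I_path_imp_I_path: "robust_I_path W H xs \<Longrightarrow> h \<in> H \<Longrightarrow> I_path W h xs"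
  by (simp add: robust_I_path_def)

lemma I_path_imp_BR_path: "I_path W h xs \<Longrightarrow> BR_path W h xs"
  unfolding I_path_def BR_path_def by (meson less_imp_le)

lemma robust_improvement_flip:
  assumes "network W" "a \<in> {-1, 1}" "x i = - a"
    and improves: "\<forall>h\<in>H. 0 < a * (local_field W x i + h i)"
  shows "robust_improvement W H x (x(i := a))"
proof -
  have step: "step_player x (x(i := a)) j \<longleftrightarrow> j = i" for j
    using assms(2,3) by (auto simp: step_player_def)
  show ?thesis
    unfolding robust_improvement_def step
    using improves assms(3) by (simp add: utility_eq local_field_fun_upd_self[OF assms(1)])
qed

(* i \<in> plus_possible W hp P: +1 is a best reply of i to config P for some field of the box,
   the most favourable one being hp; i \<in> plus_forced W hm P: +1 is the strict best reply for
   every field of the box. So P is robustly stuck iff config P admits no robust improvement. *)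
definition plus_possible :: "('v::finite \<Rightarrow> 'v \<Rightarrow> real) \<Rightarrow> ('v \<Rightarrow> real) \<Rightarrow> 'v set \<Rightarrow> 'v set" where
  "plus_possible W hp P = {i. 0 \<le> local_field W (config P) i + hp i}"

definition plus_forced :: "('v::finite \<Rightarrow> 'v \<Rightarrow> real) \<Rightarrow> ('v \<Rightarrow> real) \<Rightarrow> 'v set \<Rightarrow> 'v set" where
  "plus_forced W hm P = {i. 0 < local_field W (config P) i + hm i}"

definition robustly_stuck ::
  "('v::finite \<Rightarrow> 'v \<Rightarrow> real) \<Rightarrow> ('v \<Rightarrow> real) \<Rightarrow> ('v \<Rightarrow> real) \<Rightarrow> 'v set \<Rightarrow> bool" where
  "robustly_stuck W hm hp P \<longleftrightarrow> P \<subseteq> plus_possible W hp P \<and> plus_forced W hm P \<subseteq> P"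

lemma plus_possible_mono: "network W \<Longrightarrow> P \<subseteq> Q \<Longrightarrow> plus_possible W hp P \<subseteq> plus_possible W hp Q"
  unfolding plus_possible_def using local_field_config_mono[of W P Q] by (auto intro: order.trans)

lemma plus_forced_mono: "network W \<Longrightarrow> P \<subseteq> Q \<Longrightarrow> plus_forced W hm P \<subseteq> plus_forced W hm Q"
  unfolding plus_forced_def using local_field_config_mono[of W P Q] by (auto intro: order.strict_trans2)

lemma plus_forced_subset_possible:
  assumes "\<forall>i. hm i \<le> hp i"
  shows "plus_forced W hm P \<subseteq> plus_possible W hp P"
proof
  fix i assume "i \<in> plus_forced W hm P"
  then show "i \<in> plus_possible W hp P"
    using assms[rule_format, of i] unfolding plus_forced_def plus_possible_def by simp
qed

lemma robustly_stuck_between: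
  assumes net: "network W" and hle: "\<forall>i. hm i \<le> hp i"
    and A: "A \<subseteq> plus_possible W hp A" and C: "plus_forced W hm C \<subseteq> C" and "A \<subseteq> C"
  obtains P where "A \<subseteq> P" "P \<subseteq> C" "robustly_stuck W hm hp P"
proof -
  define Q where "Q = \<Union>{P. P \<subseteq> C \<and> P \<subseteq> plus_possible W hp P}"
  have "A \<subseteq> Q" using A \<open>A \<subseteq> C\<close> by (auto simp: Q_def)
  have "Q \<subseteq> C" by (auto simp: Q_def)
  have Q_possible: "Q \<subseteq> plus_possible W hp Q"
  proof
    fix i assume "i \<in> Q"
    then obtain P where P: "P \<subseteq> C" "P \<subseteq> plus_possible W hp P" "i \<in> P" by (auto simp: Q_def)
    then have "P \<subseteq> Q" by (auto simp: Q_def)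
    then show "i \<in> plus_possible W hp Q" using P plus_possible_mono[OF net] by blast
  qed
  \<comment> \<open>Q is the largest self-supporting subset of C; adding its forced players keeps it
    self-supporting, so they already belong to Q.\<close>
  define T where "T = Q \<union> plus_forced W hm Q"
  have "T \<subseteq> C" using \<open>Q \<subseteq> C\<close> C plus_forced_mono[OF net \<open>Q \<subseteq> C\<close>] by (auto simp: T_def)
  moreover have "T \<subseteq> plus_possible W hp T"
  proof -
    have "T \<subseteq> plus_possible W hp Q"
      using Q_possible plus_forced_subset_possible[OF hle] by (auto simp: T_def)
    also have "\<dots> \<subseteq> plus_possible W hp T" by (rule plus_possible_mono[OF net]) (auto simp: T_def)
    finally show ?thesis .
  qed
  ultimately have "T \<subseteq> Q" by (auto simp: Q_def)
  then have "plus_forced W hm Q \<subseteq> Q" by (auto simp: T_def)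
  then show ?thesis using that \<open>A \<subseteq> Q\<close> \<open>Q \<subseteq> C\<close> Q_possible by (auto simp: robustly_stuck_def)
qed

lemma robustly_stuck_trivial:
  assumes hle: "\<forall>i. hm i \<le> hp i" and indec: "robustly_indecomposable W (box hm hp)"
    and stuck: "robustly_stuck W hm hp P"
  shows "P = {} \<or> P = UNIV"
proof (rule ccontr)
  assume "\<not> (P = {} \<or> P = UNIV)"
  define h where "h = (\<lambda>i. if i \<in> P then hp i else hm i)"
  have "h \<in> box hm hp" using hle by (auto simp: h_def box_def)
  then have "h_indecomposable W h" using indec by (simp add: robustly_indecomposable_def)
  then obtain i where "utility W h (config P) i < 0"
    using h_indecomposable_negative_utility \<open>\<not> (P = {} \<or> P = UNIV)\<close> by metis
  then have "i \<in> P \<and> i \<notin> plus_possible W hp P \<or> i \<notin> P \<and> i \<in> plus_forced W hm P"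
    by (cases "i \<in> P") (auto simp: utility_eq h_def plus_possible_def plus_forced_def config_def)
  then show False using stuck by (auto simp: robustly_stuck_def)
qed

lemma robustly_stuck_empty_iff: "robustly_stuck W hm hp {} \<longleftrightarrow> (\<forall>i. hm i \<le> outdeg W i)"
  by (auto simp: robustly_stuck_def plus_forced_def local_field_all_minus not_less)

lemma robustly_stuck_UNIV_iff: "robustly_stuck W hm hp UNIV \<longleftrightarrow> (\<forall>i. - hp i \<le> outdeg W i)"
proof -
  have "0 \<le> outdeg W i + hp i \<longleftrightarrow> - hp i \<le> outdeg W i" for i by linarith
  then show ?thesis by (auto simp: robustly_stuck_def plus_possible_def local_field_all_plus)
qed

lemma consensus_between:
  assumes "network W" "\<forall>i. hm i \<le> hp i" "robustly_indecomposable W (box hm hp)"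
    and "A \<subseteq> plus_possible W hp A" "plus_forced W hm C \<subseteq> C" "A \<subseteq> C"
  shows "A = {} \<and> robustly_stuck W hm hp {} \<or> C = UNIV \<and> robustly_stuck W hm hp UNIV"
proof -
  obtain P where "A \<subseteq> P" "P \<subseteq> C" "robustly_stuck W hm hp P"
    using robustly_stuck_between assms by metis
  then show ?thesis using robustly_stuck_trivial[OF assms(2,3)] by blast
qed

lemma robust_improvement_insert:
  assumes "network W" "i \<notin> S" "i \<in> plus_forced W hm S"
  shows "robust_improvement W (box hm hp) (config S) (config (insert i S))"
proof -
  have "0 < 1 * (local_field W (config S) i + h i)" if "h \<in> box hm hp" for h
  proof -
    have "hm i \<le> h i" using that by (simp add: box_def)
    then show ?thesis using assms(3) by (simp add: plus_forced_def)
  qed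
  then show ?thesis
    unfolding config_insert using assms(1,2)
    by (intro robust_improvement_flip) (auto simp: config_def)
qed

lemma robust_improvement_remove:
  assumes "network W" "i \<in> S" "i \<notin> plus_possible W hp S"
  shows "robust_improvement W (box hm hp) (config S) (config (S - {i}))"
proof -
  have "0 < -1 * (local_field W (config S) i + h i)" if "h \<in> box hm hp" for h
  proof -
    have "h i \<le> hp i" using that by (simp add: box_def)
    then show ?thesis using assms(3) by (simp add: plus_possible_def)
  qed
  then show ?thesis
    unfolding config_remove using assms(1,2)
    by (intro robust_improvement_flip) (auto simp: config_def)
qed

lemma robust_I_path_upwards:
  assumes net: "network W"
    and closed: "\<forall>C. S \<subseteq> C \<longrightarrow> plus_forced W hm C \<subseteq> C \<longrightarrow> C = UNIV"
  shows "\<exists>xs. robust_I_path W (box hm hp) xs \<and> hd xs = config S \<and> last xs = (\<lambda>_. 1)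
    \<and> length xs = card (- S) + 1"
  using closed
proof (induction "card (- S)" arbitrary: S)
  case 0
  then have "S = UNIV" by (simp add: card_eq_0_iff) blast
  then show ?case by (intro exI[of _ "[config S]"]) (simp add: robust_I_path_Cons consensus_in_configs)
next
  case (Suc n)
  then have "\<not> plus_forced W hm S \<subseteq> S" by auto
  then obtain i where i: "i \<notin> S" "i \<in> plus_forced W hm S" by blast
  have "card (- insert i S) = n" using Suc.hyps(2) i(1) by (simp add: Compl_insert)
  moreover have "\<forall>C. insert i S \<subseteq> C \<longrightarrow> plus_forced W hm C \<subseteq> C \<longrightarrow> C = UNIV"
    using Suc.prems by (meson insert_subset)
  ultimately obtain xs where xs: "robust_I_path W (box hm hp) xs" "hd xs = config (insert i S)"
      "last xs = (\<lambda>_. 1)" "length xs = n + 1"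
    using Suc.hyps(1)[of "insert i S"] by auto
  moreover have "robust_I_path W (box hm hp) (config S # xs)"
    using xs(1,2) robust_improvement_insert[OF net i] by (simp add: robust_I_path_Cons config_in_configs)
  ultimately show ?case using Suc.hyps(2) by (intro exI[of _ "config S # xs"]) auto
qed

lemma robust_I_path_downwards:
  assumes net: "network W"
    and no_self_supporting: "\<forall>A\<subseteq>S. A \<subseteq> plus_possible W hp A \<longrightarrow> A = {}"
  shows "\<exists>xs. robust_I_path W (box hm hp) xs \<and> hd xs = config S \<and> last xs = (\<lambda>_. -1)
    \<and> length xs = card S + 1"
  using no_self_supporting
proof (induction "card S" arbitrary: S)
  case 0
  then have "S = {}" by simp
  then show ?case by (intro exI[of _ "[config S]"]) (simp add: robust_I_path_Cons consensus_in_configs)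
next
  case (Suc n)
  then have "\<not> S \<subseteq> plus_possible W hp S" by auto
  then obtain i where i: "i \<in> S" "i \<notin> plus_possible W hp S" by blast
  have "card (S - {i}) = n" using Suc.hyps(2) i(1) by simp
  moreover have "\<forall>A\<subseteq>S - {i}. A \<subseteq> plus_possible W hp A \<longrightarrow> A = {}"
    using Suc.prems by (meson Diff_subset order_trans)
  ultimately obtain xs where xs: "robust_I_path W (box hm hp) xs" "hd xs = config (S - {i})"
      "last xs = (\<lambda>_. -1)" "length xs = n + 1"
    using Suc.hyps(1)[of "S - {i}"] by auto
  moreover have "robust_I_path W (box hm hp) (config S # xs)"
    using xs(1,2) robust_improvement_remove[OF net i] by (simp add: robust_I_path_Cons config_in_configs)
  ultimately show ?case using Suc.hyps(2) by (intro exI[of _ "config S # xs"]) auto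
qed

lemma robust_I_path_to_consensus:
  fixes W :: "'v::finite \<Rightarrow> 'v \<Rightarrow> real"
  assumes net: "network W" and hle: "\<forall>i. hm i \<le> hp i"
    and indec: "robustly_indecomposable W (box hm hp)" and "x \<in> configs"
  shows "\<exists>xs. robust_I_path W (box hm hp) xs \<and> hd xs = x \<and>
    length xs - 1 \<le> card (UNIV :: 'v set) \<and> last xs \<in> {(\<lambda>_. 1), (\<lambda>_. -1)}"
proof -
  define S where "S = {j. x j = 1}"
  have x: "x = config S" using configs_eq_config[OF \<open>x \<in> configs\<close>] by (simp add: S_def)
  show ?thesis
  proof (cases "\<exists>A\<subseteq>S. A \<noteq> {} \<and> A \<subseteq> plus_possible W hp A")
    case True
    then have "\<forall>C. S \<subseteq> C \<longrightarrow> plus_forced W hm C \<subseteq> C \<longrightarrow> C = UNIV"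
      using consensus_between[OF net hle indec] by (meson order_trans)
    from robust_I_path_upwards[OF net this] obtain xs where
      "robust_I_path W (box hm hp) xs" "hd xs = x" "last xs = (\<lambda>_. 1)" "length xs = card (- S) + 1"
      using x by blast
    then show ?thesis using card_mono[of UNIV "- S"] by (intro exI[of _ xs]) auto
  next
    case False
    from robust_I_path_downwards[OF net, of S hp hm] obtain xs where
      "robust_I_path W (box hm hp) xs" "hd xs = x" "last xs = (\<lambda>_. -1)" "length xs = card S + 1"
      using False x by blast
    then show ?thesis using card_mono[of UNIV S] by (intro exI[of _ xs]) auto
  qed
qed

lemma consensus_equilibria_globally_I_stable:
  assumes net: "network W" and "h_indecomposable W h"
    and "\<forall>i. h i \<le> outdeg W i" "\<forall>i. - h i \<le> outdeg W i"
    and reach: "globally_reachable (I_path W h) {(\<lambda>_. 1), (\<lambda>_. -1)}"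
  shows "equilibria W h = {(\<lambda>_. 1), (\<lambda>_. -1)} \<and> globally_stable (I_path W h) {(\<lambda>_. 1), (\<lambda>_. -1)}"
proof -
  have "0 \<le> utility W h (\<lambda>_. 1) i" "0 \<le> utility W h (\<lambda>_. -1) i" for i
    using assms(3,4)[rule_format, of i] by (simp_all add: utility_all_plus utility_all_minus)
  then have "(\<lambda>_. 1) \<in> equilibria W h" "(\<lambda>_. -1) \<in> equilibria W h"
    using consensus_in_configs by (simp_all add: equilibria_iff[OF net])
  then have eq: "equilibria W h = {(\<lambda>_. 1), (\<lambda>_. -1)}"
    using equilibria_subset_consensus[OF net assms(2)] by blast
  then show ?thesis using globally_stable_I_if_equilibria[OF net reach] by simp
qed

lemma globally_reachable_mono:
  "globally_reachable P Y \<Longrightarrow> (\<And>xs. P xs \<Longrightarrow> Q xs) \<Longrightarrow> globally_reachable Q Y"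
  unfolding globally_reachable_def by blast

lemma unique_consensus_equilibrium_globally_BR_stable:
  assumes net: "network W" and indec: "h_indecomposable W h"
    and yz: "{y, z} = {(\<lambda>_. 1), (\<lambda>_. -1)}"
    and pos: "\<forall>i. 0 < utility W h y i" and neg: "utility W h z k < 0"
    and reach: "globally_reachable (BR_path W h) {y}"
  shows "equilibria W h = {y} \<and> globally_stable (BR_path W h) {y}"
proof -
  have "y \<in> configs" using yz consensus_in_configs by (metis insertCI insertE singletonD)
  then have "y \<in> equilibria W h" using pos by (simp add: equilibria_iff[OF net] less_imp_le)
  moreover have "z \<notin> equilibria W h" using neg by (auto simp: equilibria_iff[OF net] not_le)
  ultimately have "equilibria W h = {y}" using equilibria_subset_consensus[OF net indec] yz by blast
  then show ?thesis using globally_stable_BR_if_positive[OF net reach] pos by simp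
qed

lemma all_plus_unique_globally_BR_stable:
  fixes W :: "'v::finite \<Rightarrow> 'v \<Rightarrow> real"
  assumes net: "network W" and hle: "\<forall>i. hm i \<le> hp i"
    and indec: "robustly_indecomposable W (box hm hp)"
    and not_stuck: "\<not> (\<forall>i. hm i \<le> outdeg W i)"
  shows "globally_reachable (robust_I_path W (box hm hp)) {(\<lambda>_. 1)} \<and>
    (\<forall>h\<in>box hm hp. equilibria W h = {(\<lambda>_. 1)} \<and> globally_stable (BR_path W h) {(\<lambda>_. 1)})"
proof -
  have closed: "C = UNIV" if "plus_forced W hm C \<subseteq> C" for C
    using consensus_between[OF net hle indec _ that, of "{}"] not_stuck
    by (simp add: robustly_stuck_empty_iff)
  have reach: "globally_reachable (robust_I_path W (box hm hp)) {(\<lambda>_. 1)}"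
    unfolding globally_reachable_def
  proof
    fix x :: "'v \<Rightarrow> real" assume "x \<in> configs"
    then have "x = config {j. x j = 1}" by (rule configs_eq_config)
    then show "\<exists>xs. robust_I_path W (box hm hp) xs \<and> hd xs = x \<and> last xs \<in> {(\<lambda>_. 1)}"
      using robust_I_path_upwards[OF net, of "{j. x j = 1}" hm hp] closed by auto
  qed
  have pos: "0 < outdeg W i + hm i" for i
  proof -
    have "i \<in> plus_forced W hm (- {i})" using closed[of "- {i}"] by blast
    moreover have "config (- {i}) = (\<lambda>_. 1)(i := -1)" by (auto simp: config_def)
    ultimately show ?thesis
      by (simp add: plus_forced_def local_field_fun_upd_self[OF net] local_field_all_plus)
  qed
  obtain k where k: "outdeg W k < hm k" using not_stuck by (auto simp: not_le)
  have "equilibria W h = {(\<lambda>_. 1)} \<and> globally_stable (BR_path W h) {(\<lambda>_. 1)}"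
    if h: "h \<in> box hm hp" for h
  proof (rule unique_consensus_equilibrium_globally_BR_stable[OF net, where z = "\<lambda>_. -1" and k = k])
    have hb: "hm i \<le> h i" for i using h by (simp add: box_def)
    show "\<forall>i. 0 < utility W h (\<lambda>_. 1) i"
    proof
      fix i show "0 < utility W h (\<lambda>_. 1) i" using pos[of i] hb[of i] by (simp add: utility_all_plus)
    qed
    show "utility W h (\<lambda>_. -1) k < 0" using k hb[of k] by (simp add: utility_all_minus)
    show "h_indecomposable W h" using indec h by (simp add: robustly_indecomposable_def)
    show "globally_reachable (BR_path W h) {(\<lambda>_. 1)}"
      using reach by (rule globally_reachable_mono)
        (simp add: I_path_imp_BR_path robust_I_path_imp_I_path[OF _ h])
  qed auto
  with reach show ?thesis by blast
qed

lemma all_minus_unique_globally_BR_stable: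
  fixes W :: "'v::finite \<Rightarrow> 'v \<Rightarrow> real"
  assumes net: "network W" and hle: "\<forall>i. hm i \<le> hp i"
    and indec: "robustly_indecomposable W (box hm hp)"
    and not_stuck: "\<not> (\<forall>i. - hp i \<le> outdeg W i)"
  shows "globally_reachable (robust_I_path W (box hm hp)) {(\<lambda>_. -1)} \<and>
    (\<forall>h\<in>box hm hp. equilibria W h = {(\<lambda>_. -1)} \<and> globally_stable (BR_path W h) {(\<lambda>_. -1)})"
proof -
  have empty: "A = {}" if "A \<subseteq> plus_possible W hp A" for A
    using consensus_between[OF net hle indec that, of UNIV] not_stuck
    by (simp add: robustly_stuck_UNIV_iff)
  have reach: "globally_reachable (robust_I_path W (box hm hp)) {(\<lambda>_. -1)}"
    unfolding globally_reachable_def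
  proof
    fix x :: "'v \<Rightarrow> real" assume "x \<in> configs"
    then have "x = config {j. x j = 1}" by (rule configs_eq_config)
    then show "\<exists>xs. robust_I_path W (box hm hp) xs \<and> hd xs = x \<and> last xs \<in> {(\<lambda>_. -1)}"
      using robust_I_path_downwards[OF net, of "{j. x j = 1}" hp hm] empty by auto
  qed
  have pos: "0 < outdeg W i - hp i" for i
  proof -
    have "i \<notin> plus_possible W hp {i}" using empty[of "{i}"] by blast
    moreover have "config {i} = (\<lambda>_. -1)(i := 1)" by (auto simp: config_def)
    ultimately show ?thesis
      by (simp add: plus_possible_def local_field_fun_upd_self[OF net] local_field_all_minus)
  qed
  obtain k where k: "outdeg W k < - hp k" using not_stuck by (auto simp: not_le)
  have "equilibria W h = {(\<lambda>_. -1)} \<and> globally_stable (BR_path W h) {(\<lambda>_. -1)}"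
    if h: "h \<in> box hm hp" for h
  proof (rule unique_consensus_equilibrium_globally_BR_stable[OF net, where z = "\<lambda>_. 1" and k = k])
    have hb: "h i \<le> hp i" for i using h by (simp add: box_def)
    show "\<forall>i. 0 < utility W h (\<lambda>_. -1) i"
    proof
      fix i show "0 < utility W h (\<lambda>_. -1) i" using pos[of i] hb[of i] by (simp add: utility_all_minus)
    qed
    show "utility W h (\<lambda>_. 1) k < 0" using k hb[of k] by (simp add: utility_all_plus)
    show "h_indecomposable W h" using indec h by (simp add: robustly_indecomposable_def)
    show "globally_reachable (BR_path W h) {(\<lambda>_. -1)}"
      using reach by (rule globally_reachable_mono)
        (simp add: I_path_imp_BR_path robust_I_path_imp_I_path[OF _ h])
  qed auto
  with reach show ?thesis by blast
qed

lemma one_sided_unique_globally_BR_stable: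
  fixes W :: "'v::finite \<Rightarrow> 'v \<Rightarrow> real"
  assumes net: "network W" and hle: "\<forall>i. hm i \<le> hp i"
    and indec: "robustly_indecomposable W (box hm hp)"
    and a: "a \<in> {1, -1}" and not_regular: "\<not> (\<forall>i. outdeg W i \<ge> a * hneg a hm hp i)"
  shows "globally_reachable (robust_I_path W (box hm hp)) {(\<lambda>_. a)} \<and>
    (\<forall>h\<in>box hm hp. equilibria W h = {(\<lambda>_. a)} \<and> globally_stable (BR_path W h) {(\<lambda>_. a)})"
proof -
  consider "a = 1" | "a = -1" using a by blast
  then show ?thesis
  proof cases
    case 1
    then have "\<not> (\<forall>i. hm i \<le> outdeg W i)" using not_regular by (simp add: hneg_def)
    from all_plus_unique_globally_BR_stable[OF net hle indec this] show ?thesis using 1 by simp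
  next
    case 2
    then have "\<not> (\<forall>i. - hp i \<le> outdeg W i)" using not_regular by (simp add: hneg_def)
    from all_minus_unique_globally_BR_stable[OF net hle indec this] show ?thesis using 2 by simp
  qed
qed

theorem theorem4:
  fixes W :: "'v::finite \<Rightarrow> 'v \<Rightarrow> real" and hm hp :: "'v \<Rightarrow> real"
  assumes net: "network W"
    and hle: "\<forall>i. hm i \<le> hp i"
    and indec: "robustly_indecomposable W (box hm hp)"
  shows
    "((\<forall>x\<in>configs. \<exists>xs. robust_I_path W (box hm hp) xs \<and> hd xs = x \<and>
          length xs - 1 \<le> card (UNIV :: 'v set) \<and> last xs \<in> {(\<lambda>_. 1), (\<lambda>_. -1)})
     \<and> (\<forall>h\<in>box hm hp. globally_reachable (I_path W h) {(\<lambda>_. 1), (\<lambda>_. -1)}))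
     \<and> ((\<forall>i. outdeg W i \<ge> hp i) \<and> (\<forall>i. outdeg W i \<ge> - hm i) \<longrightarrow>
       (\<forall>h\<in>box hm hp. equilibria W h = {(\<lambda>_. 1), (\<lambda>_. -1)} \<and>
          globally_stable (I_path W h) {(\<lambda>_. 1), (\<lambda>_. -1)}))
     \<and> (\<forall>a\<in>{1, -1::real}.
       (\<forall>i. outdeg W i \<ge> - a * hneg a hm hp i) \<and> \<not> (\<forall>i. outdeg W i \<ge> a * hneg a hm hp i) \<longrightarrow>
       (\<forall>x\<in>configs. \<exists>xs. robust_I_path W (box hm hp) xs \<and> hd xs = x \<and> last xs = (\<lambda>_. a))
       \<and> (\<forall>h\<in>box hm hp. equilibria W h = {(\<lambda>_. a)} \<and>
             globally_stable (BR_path W h) {(\<lambda>_. a)}))"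
proof -
  let ?Y = "{(\<lambda>_::'v. 1::real), (\<lambda>_. -1)}"
  have paths: "\<forall>x\<in>configs. \<exists>xs. robust_I_path W (box hm hp) xs \<and> hd xs = x \<and>
      length xs - 1 \<le> card (UNIV :: 'v set) \<and> last xs \<in> ?Y"
    using robust_I_path_to_consensus[OF net hle indec] by blast
  have reach: "globally_reachable (I_path W h) ?Y" if "h \<in> box hm hp" for h
    using paths robust_I_path_imp_I_path[OF _ that] unfolding globally_reachable_def by blast
  have regular: "equilibria W h = ?Y \<and> globally_stable (I_path W h) ?Y"
    if h: "h \<in> box hm hp" and reg: "\<forall>i. outdeg W i \<ge> hp i" "\<forall>i. outdeg W i \<ge> - hm i" for h
  proof (rule consensus_equilibria_globally_I_stable[OF net _ _ _ reach[OF h]])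
    show "h_indecomposable W h" using indec h by (simp add: robustly_indecomposable_def)
    have "hm i \<le> h i \<and> h i \<le> hp i" for i using h by (simp add: box_def)
    then show "\<forall>i. h i \<le> outdeg W i" "\<forall>i. - h i \<le> outdeg W i"
      using reg by (meson order.trans neg_le_iff_le)+
  qed
  have one_sided: "(\<forall>x\<in>configs. \<exists>xs. robust_I_path W (box hm hp) xs \<and> hd xs = x \<and> last xs = (\<lambda>_. a))
       \<and> (\<forall>h\<in>box hm hp. equilibria W h = {(\<lambda>_. a)} \<and> globally_stable (BR_path W h) {(\<lambda>_. a)})"
    if "a \<in> {1, -1}" "\<not> (\<forall>i. outdeg W i \<ge> a * hneg a hm hp i)" for a :: real
    using one_sided_unique_globally_BR_stable[OF net hle indec that] by (simp add: globally_reachable_def)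
  show ?thesis using paths reach regular one_sided by blast
qed

end
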